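(* Let $G$ be a finite, simple, undirected, connected graph that is $C_4$-free, has order $n$, diameter $d$, and edge-connectivity $\lambda\geq 4$. Then $$d\leq \frac{n-3}{3}.$$
   Context: A graph is $C_4$-free if it contains no cycle of length four as a (not necessarily induced) subgraph. The edge-connectivity of a connected graph is the minimum number of edges whose removal disconnects it. *)

theory Defs
  imports Complex_Main
begin

definition simple_graph :: "'a set \<Rightarrow> ('a \<Rightarrow> 'a \<Rightarrow> bool) \<Rightarrow> bool" where
  "simple_graph V E \<longleftrightarrow> finite V \<and> (\<forall>x y. E x y \<longrightarrow> x \<in> V \<and> y \<in> V)
     \<and> (\<forall>x y. E x y \<longrightarrow> E y x) \<and> (\<forall>x. \<not> E x x)"

definition is_walk :: "'a set \<Rightarrow> ('a \<Rightarrow> 'a \<Rightarrow> bool) \<Rightarrow> 'a list \<Rightarrow> bool" where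
  "is_walk V E xs \<longleftrightarrow> xs \<noteq> [] \<and> set xs \<subseteq> V \<and>
     (\<forall>i. Suc i < length xs \<longrightarrow> E (xs ! i) (xs ! Suc i))"

definition walk_betw :: "'a set \<Rightarrow> ('a \<Rightarrow> 'a \<Rightarrow> bool) \<Rightarrow> 'a \<Rightarrow> 'a list \<Rightarrow> 'a \<Rightarrow> bool" where
  "walk_betw V E u xs v \<longleftrightarrow> is_walk V E xs \<and> hd xs = u \<and> last xs = v"

definition connected_graph :: "'a set \<Rightarrow> ('a \<Rightarrow> 'a \<Rightarrow> bool) \<Rightarrow> bool" where
  "connected_graph V E \<longleftrightarrow> V \<noteq> {} \<and> (\<forall>u\<in>V. \<forall>v\<in>V. \<exists>xs. walk_betw V E u xs v)"

text \<open>Distance: length of a shortest walk (meaningful in a connected graph).\<close>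
definition dist :: "'a set \<Rightarrow> ('a \<Rightarrow> 'a \<Rightarrow> bool) \<Rightarrow> 'a \<Rightarrow> 'a \<Rightarrow> nat" where
  "dist V E u v = (LEAST k. \<exists>xs. walk_betw V E u xs v \<and> length xs = Suc k)"

definition diameter :: "'a set \<Rightarrow> ('a \<Rightarrow> 'a \<Rightarrow> bool) \<Rightarrow> nat" where
  "diameter V E = Max {dist V E u v | u v. u \<in> V \<and> v \<in> V}"

definition C4_free :: "('a \<Rightarrow> 'a \<Rightarrow> bool) \<Rightarrow> bool" where
  "C4_free E \<longleftrightarrow> \<not> (\<exists>a b c d. distinct [a, b, c, d] \<and> E a b \<and> E b c \<and> E c d \<and> E d a)"

definition edges :: "('a \<Rightarrow> 'a \<Rightarrow> bool) \<Rightarrow> 'a set set" where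
  "edges E = {{x, y} | x y. E x y}"

definition remove_edges :: "('a \<Rightarrow> 'a \<Rightarrow> bool) \<Rightarrow> 'a set set \<Rightarrow> 'a \<Rightarrow> 'a \<Rightarrow> bool" where
  "remove_edges E F = (\<lambda>x y. E x y \<and> {x, y} \<notin> F)"

text \<open>Edge-connectivity at least k: the graph is nontrivial (at least two
vertices, so the trivial graph has edge-connectivity 0) and removing any
set of fewer than k edges leaves it connected; i.e. every disconnecting
edge set has at least k edges.\<close>
definition edge_connectivity_ge :: "'a set \<Rightarrow> ('a \<Rightarrow> 'a \<Rightarrow> bool) \<Rightarrow> nat \<Rightarrow> bool" where
  "edge_connectivity_ge V E k \<longleftrightarrow> card V \<ge> 2 \<and>
     (\<forall>F. F \<subseteq> edges E \<and> card F < k \<longrightarrow> connected_graph V (remove_edges E F))"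

end

theory Submission
  imports Defs
begin

text \<open>Take vertices v and w at distance d, the diameter, and the distance layers
L_0, ..., L_d around v. Edge-connectivity at least 4 means every edge cut has at least 4 edges:
so every vertex has degree at least 4, and at least 4 edges join L_i to L_(i+1). C4-freeness
means that two distinct vertices have at most one common neighbour. Counting with these two
facts, any three consecutive layers contain at least 9 vertices, and L_0, L_1, L_2 at least 13
(v, its at least 4 neighbours, and at least 2 private neighbours of each of these). Summing over
the d + 1 layers gives n \<ge> 3d + 3.\<close>

lemma card_Un3_ge:
  assumes "finite X" "finite Y" "finite Z"
  shows "card X + card Y + card Z
    \<le> card (X \<union> Y \<union> Z) + card (X \<inter> Y) + card (X \<inter> Z) + card (Y \<inter> Z)"
proof -
  have "card ((X \<union> Y) \<inter> Z) \<le> card (X \<inter> Z) + card (Y \<inter> Z)"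
    using card_Un_le[of "X \<inter> Z" "Y \<inter> Z"] by (simp add: Int_Un_distrib2)
  moreover have "card X + card Y = card (X \<union> Y) + card (X \<inter> Y)"
    using card_Un_Int assms by blast
  moreover have "card (X \<union> Y) + card Z = card (X \<union> Y \<union> Z) + card ((X \<union> Y) \<inter> Z)"
    using card_Un_Int[of "X \<union> Y" Z] assms by simp
  ultimately show ?thesis by linarith
qed

lemma sum_ge_three_Suc_if_windows_ge_9:
  fixes s :: "nat \<Rightarrow> nat"
  assumes "2 \<le> D"
    and first: "13 \<le> s 0 + s 1 + s 2"
    and pos: "\<And>k. k \<le> D \<Longrightarrow> 1 \<le> s k"
    and window: "\<And>i. i + 2 \<le> D \<Longrightarrow> 9 \<le> s i + s (i + 1) + s (i + 2)"
  shows "3 * Suc D \<le> (\<Sum>k\<le>D. s k)"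
proof -
  have "3 * j \<le> (\<Sum>k<j. s k)" if "3 \<le> j" "j \<le> Suc D" for j
    using that
  proof (induction j rule: less_induct)
    case (less j)
    have first3: "(\<Sum>k<3. s k) = s 0 + s 1 + s 2"
      by (simp add: numeral_3_eq_3 numeral_2_eq_2)
    consider "j = 3" | "j = 4" | "j = 5" | m where "j = m + 3" "3 \<le> m"
    proof -
      have "j = 3 \<or> j = 4 \<or> j = 5 \<or> 6 \<le> j"
        using less.prems by linarith
      then show thesis
        using that(1-3) that(4)[of "j - 3"] by fastforce
    qed
    then show ?case
    proof cases
      case 1
      then show ?thesis using first first3 by simp
    next
      case 2
      then show ?thesis using first first3 pos[of 3] less.prems by (simp add: numeral_eq_Suc)
    next
      case 3
      then show ?thesis
        using first first3 pos[of 3] pos[of 4] less.prems by (simp add: numeral_eq_Suc)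
    next
      case (4 m)
      have "3 * m \<le> (\<Sum>k<m. s k)" using less.IH[of m] 4 less.prems by simp
      moreover have "9 \<le> s m + s (m + 1) + s (m + 2)" using window[of m] 4 less.prems by simp
      ultimately show ?thesis using 4 by (simp add: numeral_eq_Suc)
    qed
  qed
  from this[of "Suc D"] show ?thesis using assms(1) by (simp add: lessThan_Suc_atMost)
qed

lemma dist_le_walk_length:
  assumes "walk_betw V E u xs v"
  shows "dist V E u v \<le> length xs - 1"
proof -
  have "length xs = Suc (length xs - 1)"
    using assms by (cases xs) (auto simp: walk_betw_def is_walk_def)
  then show ?thesis
    unfolding dist_def using assms by (intro Least_le exI[of _ xs]) simp
qed

lemma walk_betw_snoc:
  assumes "walk_betw V E u xs w" "E w z" "z \<in> V"
  shows "walk_betw V E u (xs @ [z]) z"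
proof -
  have xs: "xs \<noteq> []" "set xs \<subseteq> V" "hd xs = u" "last xs = w"
    "\<And>i. Suc i < length xs \<Longrightarrow> E (xs ! i) (xs ! Suc i)"
    using assms(1) by (auto simp: walk_betw_def is_walk_def)
  have "E ((xs @ [z]) ! i) ((xs @ [z]) ! Suc i)" if "Suc i < length (xs @ [z])" for i
  proof (cases "Suc i < length xs")
    case True
    then show ?thesis using xs(5) by (simp add: nth_append)
  next
    case False
    then have "i = length xs - 1" using that by simp
    then show ?thesis using xs(1,4) assms(2) by (simp add: nth_append last_conv_nth)
  qed
  then show ?thesis using xs assms(3) by (simp add: walk_betw_def is_walk_def)
qed

lemma walk_betw_take:
  assumes "walk_betw V E u xs v" "k < length xs"
  shows "walk_betw V E u (take (Suc k) xs) (xs ! k)"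
proof -
  have "take (Suc k) xs \<noteq> []" "length (take (Suc k) xs) = Suc k"
    using assms(2) by auto
  then have "last (take (Suc k) xs) = xs ! k"
    by (simp add: last_conv_nth)
  then show ?thesis
    using assms unfolding walk_betw_def is_walk_def by (auto simp: hd_take dest: in_set_takeD)
qed

lemma is_walk_stays_in:
  assumes "is_walk V E xs" "hd xs \<in> S" "\<And>a b. E a b \<Longrightarrow> a \<in> S \<Longrightarrow> b \<in> S"
  shows "set xs \<subseteq> S"
proof -
  have "xs ! m \<in> S" if "m < length xs" for m
    using that
  proof (induction m)
    case 0
    then show ?case using assms(2) by (simp add: hd_conv_nth)
  next
    case (Suc m)
    then show ?case using assms(1,3) by (auto simp: is_walk_def)
  qed
  then show ?thesis by (auto simp: in_set_conv_nth)
qed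

locale sgraph =
  fixes V :: "'a set" and E :: "'a \<Rightarrow> 'a \<Rightarrow> bool"
  assumes simple: "simple_graph V E"
begin

lemma finite_V: "finite V"
  using simple by (simp add: simple_graph_def)

lemma edge_in_V: "E x y \<Longrightarrow> x \<in> V" "E x y \<Longrightarrow> y \<in> V"
  using simple by (simp_all add: simple_graph_def)

lemma edge_sym: "E x y \<Longrightarrow> E y x"
  using simple by (simp add: simple_graph_def)

lemma edge_irrefl: "\<not> E x x"
  using simple by (simp add: simple_graph_def)

definition nbhd :: "'a \<Rightarrow> 'a set" where
  "nbhd x = {y. E x y}"

lemma nbhd_subset_V: "nbhd x \<subseteq> V"
  using edge_in_V by (auto simp: nbhd_def)

lemma finite_nbhd: "finite (nbhd x)"
  using finite_subset[OF nbhd_subset_V finite_V] .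

lemma not_in_nbhd_self: "x \<notin> nbhd x"
  using edge_irrefl by (simp add: nbhd_def)

definition edges_between :: "'a set \<Rightarrow> 'a set \<Rightarrow> 'a set set" where
  "edges_between A B = {{a, b} | a b. E a b \<and> a \<in> A \<and> b \<in> B}"

lemma edges_between_commute: "edges_between A B = edges_between B A"
  unfolding edges_between_def by (blast intro: edge_sym insert_commute)

lemma finite_edges_between: "finite (edges_between A B)"
proof (rule finite_subset)
  show "edges_between A B \<subseteq> Pow V"
    using edge_in_V by (auto simp: edges_between_def)
qed (simp add: finite_V)

lemma card_edges_between_le:
  assumes "finite A"
  shows "card (edges_between A B) \<le> (\<Sum>a\<in>A. card (nbhd a \<inter> B))"
proof -
  have "edges_between A B = (\<Union>a\<in>A. (\<lambda>b. {a, b}) ` (nbhd a \<inter> B))"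
    by (auto simp: edges_between_def nbhd_def)
  also have "card \<dots> \<le> (\<Sum>a\<in>A. card ((\<lambda>b. {a, b}) ` (nbhd a \<inter> B)))"
    using assms by (rule card_UN_le)
  also have "\<dots> \<le> (\<Sum>a\<in>A. card (nbhd a \<inter> B))"
    by (intro sum_mono card_image_le) (simp add: finite_nbhd)
  finally show ?thesis .
qed

lemma edge_cut_card_ge:
  assumes "edge_connectivity_ge V E k" "s \<in> S" "S \<subseteq> V" "t \<in> V - S"
  shows "k \<le> card (edges_between S (V - S))"
proof (rule ccontr)
  let ?F = "edges_between S (V - S)"
  assume "\<not> k \<le> card ?F"
  moreover have "?F \<subseteq> edges E"
    by (auto simp: edges_between_def edges_def)
  ultimately have "connected_graph V (remove_edges E ?F)"
    using assms(1) by (simp add: edge_connectivity_ge_def)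
  moreover have "s \<in> V" "t \<in> V"
    using assms(2-4) by auto
  ultimately obtain xs where xs: "walk_betw V (remove_edges E ?F) s xs t"
    unfolding connected_graph_def by blast
  have "set xs \<subseteq> S"
  proof (rule is_walk_stays_in[of V])
    show "remove_edges E ?F a b \<Longrightarrow> a \<in> S \<Longrightarrow> b \<in> S" for a b
      using edge_in_V by (auto simp: remove_edges_def edges_between_def)
  qed (use xs assms(2) in \<open>simp_all add: walk_betw_def\<close>)
  moreover have "t \<in> set xs"
    using xs by (auto simp: walk_betw_def is_walk_def)
  ultimately show False using assms(4) by blast
qed

lemma card_nbhd_ge_edge_connectivity:
  assumes "edge_connectivity_ge V E k" "x \<in> V"
  shows "k \<le> card (nbhd x)"
proof -
  have "\<not> card V \<le> 1"
    using assms(1) by (simp add: edge_connectivity_ge_def)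
  then obtain t where "t \<in> V - {x}"
    using assms(2) card_le_Suc0_iff_eq[OF finite_V] by auto
  then have "k \<le> card (edges_between {x} (V - {x}))"
    using edge_cut_card_ge assms by blast
  also have "\<dots> \<le> card (nbhd x \<inter> (V - {x}))"
    using card_edges_between_le[of "{x}"] by simp
  also have "\<dots> \<le> card (nbhd x)"
    by (intro card_mono finite_nbhd) blast
  finally show ?thesis .
qed

lemma C4_free_common_nbhd_unique:
  assumes "C4_free E" "x \<noteq> y" "p \<in> nbhd x \<inter> nbhd y" "q \<in> nbhd x \<inter> nbhd y"
  shows "p = q"
proof (rule ccontr)
  assume "p \<noteq> q"
  moreover have "E x p" "E p y" "E y q" "E q x"
    using assms(3,4) edge_sym by (auto simp: nbhd_def)
  moreover have "x \<noteq> p" "x \<noteq> q" "y \<noteq> p" "y \<noteq> q"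
    using calculation(2-5) edge_irrefl by metis+
  ultimately have "distinct [x, p, y, q] \<and> E x p \<and> E p y \<and> E y q \<and> E q x"
    using assms(2) by auto
  then show False
    using assms(1) unfolding C4_free_def by blast
qed

lemma C4_free_card_Int_le_1:
  assumes "C4_free E" "x \<noteq> y" "X \<subseteq> nbhd x" "Y \<subseteq> nbhd y"
  shows "card (X \<inter> Y) \<le> 1"
proof -
  have "finite (X \<inter> Y)"
    using assms(3) finite_nbhd finite_subset by blast
  then show ?thesis
    unfolding One_nat_def card_le_Suc0_iff_eq[OF \<open>finite (X \<inter> Y)\<close>]
    using C4_free_common_nbhd_unique[OF assms(1,2)] assms(3,4) by blast
qed

lemma C4_free_card_nbhd_Int_pair_le:
  assumes "C4_free E" "x \<noteq> y" "finite R"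
  shows "card (nbhd x \<inter> R) + card (nbhd y \<inter> R) \<le> card R + 1"
proof -
  let ?X = "nbhd x \<inter> R" and ?Y = "nbhd y \<inter> R"
  have "card ?X + card ?Y = card (?X \<union> ?Y) + card (?X \<inter> ?Y)"
    using assms(3) by (intro card_Un_Int) simp_all
  moreover have "card (?X \<inter> ?Y) \<le> 1"
    by (rule C4_free_card_Int_le_1[OF assms(1,2) Int_lower1 Int_lower1])
  moreover have "card (?X \<union> ?Y) \<le> card R"
    using assms(3) by (intro card_mono) auto
  ultimately show ?thesis
    by linarith
qed

lemma C4_free_card_nbhd_Int_triple_le:
  assumes "C4_free E" "x \<noteq> y" "x \<noteq> z" "y \<noteq> z" "finite R"
  shows "card (nbhd x \<inter> R) + card (nbhd y \<inter> R) + card (nbhd z \<inter> R) \<le> card R + 3"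
proof -
  let ?X = "nbhd x \<inter> R" and ?Y = "nbhd y \<inter> R" and ?Z = "nbhd z \<inter> R"
  have "card ?X + card ?Y + card ?Z
      \<le> card (?X \<union> ?Y \<union> ?Z) + card (?X \<inter> ?Y) + card (?X \<inter> ?Z) + card (?Y \<inter> ?Z)"
    using assms(5) by (intro card_Un3_ge) simp_all
  moreover have "card (?X \<inter> ?Y) \<le> 1" "card (?X \<inter> ?Z) \<le> 1" "card (?Y \<inter> ?Z) \<le> 1"
    using C4_free_card_Int_le_1[OF assms(1) _ Int_lower1 Int_lower1] assms(2-4) by simp_all
  moreover have "card (?X \<union> ?Y \<union> ?Z) \<le> card R"
    using assms(5) by (intro card_mono) auto
  ultimately show ?thesis
    by linarith
qed

end

locale connected_sgraph = sgraph +
  assumes connected: "connected_graph V E"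
begin

lemma shortest_walk:
  assumes "u \<in> V" "v \<in> V"
  shows "\<exists>xs. walk_betw V E u xs v \<and> length xs = Suc (dist V E u v)"
proof -
  obtain xs where xs: "walk_betw V E u xs v"
    using connected assms by (auto simp: connected_graph_def)
  then have "length xs = Suc (length xs - 1)"
    by (cases xs) (auto simp: walk_betw_def is_walk_def)
  with xs have "\<exists>k xs. walk_betw V E u xs v \<and> length xs = Suc k"
    by blast
  then show ?thesis
    unfolding dist_def by (rule LeastI_ex)
qed

lemma dist_self_eq_0: "u \<in> V \<Longrightarrow> dist V E u u = 0"
  using dist_le_walk_length[of V E u "[u]" u] by (simp add: walk_betw_def is_walk_def)

lemma dist_edge_le:
  assumes "u \<in> V" "E w z"
  shows "dist V E u z \<le> Suc (dist V E u w)"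
proof -
  obtain xs where "walk_betw V E u xs w" "length xs = Suc (dist V E u w)"
    using shortest_walk assms edge_in_V by blast
  then show ?thesis
    using dist_le_walk_length[OF walk_betw_snoc] assms(2) edge_in_V(2) by fastforce
qed

lemma dist_Suc_obtain_pred:
  assumes "u \<in> V" "v \<in> V" "dist V E u v = Suc k"
  obtains w where "E w v" "dist V E u w = k"
proof -
  obtain xs where xs: "walk_betw V E u xs v" "length xs = Suc (Suc k)"
    using shortest_walk assms by force
  then have "last xs = xs ! Suc k"
    by (subst last_conv_nth) auto
  then have edge: "E (xs ! k) v"
    using xs by (auto simp: walk_betw_def is_walk_def)
  have "dist V E u (xs ! k) \<le> k"
    using dist_le_walk_length[OF walk_betw_take[OF xs(1)]] xs(2) by simp
  moreover have "Suc k \<le> Suc (dist V E u (xs ! k))"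
    using dist_edge_le[OF assms(1) edge] assms(3) by simp
  ultimately show ?thesis
    using that edge by simp
qed

definition layer :: "'a \<Rightarrow> nat \<Rightarrow> 'a set" where
  "layer v k = {w \<in> V. dist V E v w = k}"

definition ball :: "'a \<Rightarrow> nat \<Rightarrow> 'a set" where
  "ball v r = {w \<in> V. dist V E v w \<le> r}"

lemma finite_layer: "finite (layer v k)"
  using finite_V by (simp add: layer_def)

lemma layer_nonempty:
  assumes "v \<in> V" "w \<in> V" "k \<le> dist V E v w"
  shows "layer v k \<noteq> {}"
  using assms(2,3)
proof (induction "dist V E v w" arbitrary: w)
  case 0
  then show ?case by (auto simp: layer_def)
next
  case (Suc m)
  show ?case
  proof (cases "k = Suc m")
    case True
    then show ?thesis using Suc by (auto simp: layer_def)
  next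
    case False
    obtain w' where "E w' w" "dist V E v w' = m"
      using dist_Suc_obtain_pred[OF assms(1) Suc.prems(1) Suc.hyps(2)[symmetric]] .
    then show ?thesis
      using Suc False edge_in_V(1) by auto
  qed
qed

lemma nbhd_layer_subset:
  assumes "v \<in> V" "b \<in> layer v (Suc i)"
  shows "nbhd b \<subseteq> layer v i \<union> layer v (Suc i) \<union> layer v (Suc (Suc i))"
proof
  fix y assume "y \<in> nbhd b"
  then have "E b y" "E y b" "y \<in> V"
    using edge_sym edge_in_V by (auto simp: nbhd_def)
  then show "y \<in> layer v i \<union> layer v (Suc i) \<union> layer v (Suc (Suc i))"
    using dist_edge_le[OF assms(1), of b y] dist_edge_le[OF assms(1), of y b] assms(2)
    by (auto simp: layer_def)
qed

lemma card_ball_eq_sum_layers: "card (ball v r) = (\<Sum>k\<le>r. card (layer v k))"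
proof -
  have "ball v r = (\<Union>k\<le>r. layer v k)"
    by (auto simp: ball_def layer_def)
  also have "card \<dots> = (\<Sum>k\<le>r. card (layer v k))"
    using finite_layer by (intro card_UN_disjoint) (auto simp: layer_def)
  finally show ?thesis .
qed

lemma card_edges_between_layers_ge:
  assumes "edge_connectivity_ge V E k" "v \<in> V" "w \<in> V" "r < dist V E v w"
  shows "k \<le> card (edges_between (layer v r) (layer v (Suc r)))"
proof -
  have "k \<le> card (edges_between (ball v r) (V - ball v r))"
    using assms dist_self_eq_0 by (intro edge_cut_card_ge[OF assms(1), of v _ w]) (auto simp: ball_def)
  also have "\<dots> \<le> card (edges_between (layer v r) (layer v (Suc r)))"
  proof (intro card_mono finite_edges_between subsetI)
    fix e assume "e \<in> edges_between (ball v r) (V - ball v r)"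
    then obtain a b where "e = {a, b}" "E a b" "a \<in> ball v r" "b \<in> V - ball v r"
      by (auto simp: edges_between_def)
    moreover have "dist V E v b \<le> Suc (dist V E v a)"
      using dist_edge_le[OF assms(2) \<open>E a b\<close>] .
    ultimately have "E a b \<and> a \<in> layer v r \<and> b \<in> layer v (Suc r)"
      by (auto simp: ball_def layer_def)
    then show "e \<in> edges_between (layer v r) (layer v (Suc r))"
      unfolding edges_between_def using \<open>e = {a, b}\<close> by blast
  qed
  finally show ?thesis .
qed

lemma diameter_attained: "\<exists>v\<in>V. \<exists>w\<in>V. dist V E v w = diameter V E"
proof -
  let ?M = "{dist V E u v | u v. u \<in> V \<and> v \<in> V}"
  have "?M = (\<lambda>(u, v). dist V E u v) ` (V \<times> V)"
    by auto
  then have "finite ?M"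
    using finite_V by simp
  moreover obtain u where "u \<in> V"
    using connected by (auto simp: connected_graph_def)
  then have "?M \<noteq> {}"
    by blast
  ultimately have "Max ?M \<in> ?M"
    by (rule Max_in)
  then obtain u w where "u \<in> V" "w \<in> V" "dist V E u w = Max ?M"
    by auto
  then show ?thesis
    unfolding diameter_def by blast
qed

end

locale C4_free_4_edge_connected_graph = connected_sgraph +
  assumes C4_free: "C4_free E"
    and four_edge_connected: "edge_connectivity_ge V E 4"
begin

lemma card_nbhd_ge_4: "x \<in> V \<Longrightarrow> 4 \<le> card (nbhd x)"
  using card_nbhd_ge_edge_connectivity[OF four_edge_connected] .

definition private_nbhd :: "'a \<Rightarrow> 'a \<Rightarrow> 'a set" where
  "private_nbhd x y = nbhd y - insert x (nbhd x)"

lemma card_private_nbhd_ge_2: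
  assumes "y \<in> nbhd x"
  shows "2 \<le> card (private_nbhd x y)"
proof -
  have "x \<noteq> y" "y \<in> V"
    using assms not_in_nbhd_self nbhd_subset_V by auto
  have "nbhd y \<subseteq> private_nbhd x y \<union> insert x (nbhd x \<inter> nbhd y)"
    by (auto simp: private_nbhd_def)
  then have "card (nbhd y) \<le> card (private_nbhd x y \<union> insert x (nbhd x \<inter> nbhd y))"
    by (intro card_mono) (simp_all add: private_nbhd_def finite_nbhd)
  also have "\<dots> \<le> card (private_nbhd x y) + card (insert x (nbhd x \<inter> nbhd y))"
    by (rule card_Un_le)
  also have "\<dots> \<le> card (private_nbhd x y) + Suc (card (nbhd x \<inter> nbhd y))"
    by (simp add: card_insert_le_m1 card_insert_if finite_nbhd)
  finally show ?thesis
    using card_nbhd_ge_4[OF \<open>y \<in> V\<close>]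
      C4_free_card_Int_le_1[OF C4_free \<open>x \<noteq> y\<close> subset_refl subset_refl]
    by linarith
qed

lemma private_nbhd_disjoint:
  assumes "y1 \<in> nbhd x" "y2 \<in> nbhd x" "y1 \<noteq> y2"
  shows "private_nbhd x y1 \<inter> private_nbhd x y2 = {}"
proof -
  have "x \<in> nbhd y1 \<inter> nbhd y2"
    using assms edge_sym by (auto simp: nbhd_def)
  then show ?thesis
    using C4_free_common_nbhd_unique[OF C4_free assms(3)] by (auto simp: private_nbhd_def)
qed

lemma card_closed_nbhd_private_ge:
  assumes "x \<in> V" "Y \<subseteq> nbhd x"
  shows "5 + 2 * card Y \<le> card (insert x (nbhd x) \<union> (\<Union>y\<in>Y. private_nbhd x y))"
proof -
  have "finite Y"
    using assms(2) finite_nbhd finite_subset by blast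
  have "(\<Sum>y\<in>Y. 2) \<le> (\<Sum>y\<in>Y. card (private_nbhd x y))"
    using assms(2) by (intro sum_mono card_private_nbhd_ge_2) blast
  then have "2 * card Y \<le> (\<Sum>y\<in>Y. card (private_nbhd x y))"
    by simp
  also have "\<dots> = card (\<Union>y\<in>Y. private_nbhd x y)"
    using private_nbhd_disjoint assms(2) \<open>finite Y\<close>
    by (intro card_UN_disjoint[symmetric]) (auto simp: private_nbhd_def finite_nbhd)
  finally have "2 * card Y \<le> card (\<Union>y\<in>Y. private_nbhd x y)" .
  moreover have "card (insert x (nbhd x) \<union> (\<Union>y\<in>Y. private_nbhd x y))
      = Suc (card (nbhd x)) + card (\<Union>y\<in>Y. private_nbhd x y)"
    using \<open>finite Y\<close> not_in_nbhd_self
    by (subst card_Un_disjoint) (auto simp: private_nbhd_def finite_nbhd)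
  ultimately show ?thesis
    using card_nbhd_ge_4[OF assms(1)] by simp
qed

lemma card_ball_2_ge_13:
  assumes "v \<in> V"
  shows "13 \<le> card (ball v 2)"
proof -
  have "5 + 2 * card (nbhd v) \<le> card (insert v (nbhd v) \<union> (\<Union>y\<in>nbhd v. private_nbhd v y))"
    using card_closed_nbhd_private_ge[OF assms] by simp
  also have "\<dots> \<le> card (ball v 2)"
  proof (intro card_mono)
    show "finite (ball v 2)"
      using finite_V by (simp add: ball_def)
    have "dist V E v y \<le> 1" if "y \<in> nbhd v" for y
      using dist_edge_le[OF assms] dist_self_eq_0[OF assms] that by (fastforce simp: nbhd_def)
    moreover have "dist V E v z \<le> 2" if "y \<in> nbhd v" "z \<in> nbhd y" for y z
      using dist_edge_le[OF assms, of y z] calculation[OF that(1)] that(2) by (simp add: nbhd_def)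
    ultimately show "insert v (nbhd v) \<union> (\<Union>y\<in>nbhd v. private_nbhd v y) \<subseteq> ball v 2"
      using assms dist_self_eq_0 nbhd_subset_V by (fastforce simp: ball_def private_nbhd_def)
  qed
  finally show ?thesis
    using card_nbhd_ge_4[OF assms] by simp
qed

lemma card_nbhd_Int_ge_3:
  assumes "x \<in> V" "nbhd x \<subseteq> B \<union> R" "card (nbhd x \<inter> B) \<le> 1"
  shows "3 \<le> card (nbhd x \<inter> R)"
proof -
  have "card (nbhd x) \<le> card ((nbhd x \<inter> B) \<union> (nbhd x \<inter> R))"
    using assms(2) by (intro card_mono) (auto simp: finite_nbhd)
  also have "\<dots> \<le> card (nbhd x \<inter> B) + card (nbhd x \<inter> R)"
    by (rule card_Un_le)
  finally show ?thesis
    using card_nbhd_ge_4[OF assms(1)] assms(3) by linarith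
qed

text \<open>In the next two lemmas B plays the middle layer L_(i+1) and R the union of the
layers L_i and L_(i+2) around it.\<close>

lemma card_Un_ge_9_if_card_le_2:
  assumes "finite R" "B \<inter> R = {}" "card B \<le> 2"
    and to_R: "8 \<le> (\<Sum>b\<in>B. card (nbhd b \<inter> R))"
  shows "9 \<le> card (B \<union> R)"
proof -
  have "finite B"
    using to_R by (cases "finite B") auto
  moreover have "B \<noteq> {}"
    using to_R by auto
  ultimately have "0 < card B"
    by (simp add: card_gt_0_iff)
  then consider "card B = 1" | "card B = 2"
    using assms(3) by linarith
  then show ?thesis
  proof cases
    case 1
    then obtain x where "B = {x}"
      by (rule card_1_singletonE)
    then have "8 \<le> card R"
      using to_R card_mono[OF assms(1), of "nbhd x \<inter> R"] by simp
    then show ?thesis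
      using \<open>B = {x}\<close> assms(1,2) by simp
  next
    case 2
    then obtain x y where "B = {x, y}" "x \<noteq> y"
      by (auto simp: card_2_iff)
    then have "7 \<le> card R"
      using to_R C4_free_card_nbhd_Int_pair_le[OF C4_free \<open>x \<noteq> y\<close> assms(1)] by simp
    then show ?thesis
      using \<open>B = {x, y}\<close> \<open>x \<noteq> y\<close> assms(1,2) by (simp add: card_Un_disjoint)
  qed
qed

text \<open>Either some vertex of B has two neighbours in B, and its closed neighbourhood together
with their private neighbours gives 9 vertices, or every vertex of B has at least 3 neighbours
in R, and three of them already reach 6 vertices of R.\<close>

lemma card_Un_ge_9_if_card_ge_3:
  assumes "finite R" "B \<subseteq> V" "B \<inter> R = {}" "3 \<le> card B"
    and nbhd_B: "\<And>b. b \<in> B \<Longrightarrow> nbhd b \<subseteq> B \<union> R"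
  shows "9 \<le> card (B \<union> R)"
proof (cases "\<exists>x\<in>B. \<exists>y1\<in>B. \<exists>y2\<in>B. y1 \<noteq> y2 \<and> E x y1 \<and> E x y2")
  case True
  then obtain x y1 y2 where xy: "x \<in> B" "y1 \<in> B" "y2 \<in> B" "y1 \<noteq> y2" "E x y1" "E x y2"
    by blast
  have "5 + 2 * card {y1, y2} \<le> card (insert x (nbhd x) \<union> (\<Union>y\<in>{y1, y2}. private_nbhd x y))"
    using xy assms(2) by (intro card_closed_nbhd_private_ge) (auto simp: nbhd_def)
  also have "\<dots> \<le> card (B \<union> R)"
    using nbhd_B[of x] nbhd_B[of y1] nbhd_B[of y2] xy assms(1,2) finite_subset[OF _ finite_V]
    by (intro card_mono) (auto simp: private_nbhd_def)
  finally show ?thesis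
    using xy(4) by simp
next
  case False
  have many: "3 \<le> card (nbhd x \<inter> R)" if "x \<in> B" for x
  proof (rule card_nbhd_Int_ge_3)
    show "card (nbhd x \<inter> B) \<le> 1"
      unfolding One_nat_def card_le_Suc0_iff_eq[OF finite_Int[OF disjI1[OF finite_nbhd]]]
      using False that by (auto simp: nbhd_def)
  qed (use that assms(2) nbhd_B in auto)
  obtain B3 where "B3 \<subseteq> B" "card B3 = 3"
    using assms(4) obtain_subset_with_card_n by metis
  then obtain x y z where xyz: "{x, y, z} \<subseteq> B" "x \<noteq> y" "x \<noteq> z" "y \<noteq> z"
    by (auto simp: card_3_iff)
  then have "6 \<le> card R"
    using C4_free_card_nbhd_Int_triple_le[OF C4_free xyz(2-4) assms(1)] many[of x] many[of y]
      many[of z]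
    by simp
  then show ?thesis
    using assms(1-4) finite_subset[OF assms(2) finite_V] by (simp add: card_Un_disjoint)
qed

lemma sum_card_nbhd_outer_layers_ge_8:
  assumes "v \<in> V" "w \<in> V" "Suc (Suc i) \<le> dist V E v w"
  shows "8 \<le> (\<Sum>b\<in>layer v (Suc i). card (nbhd b \<inter> (layer v i \<union> layer v (Suc (Suc i)))))"
proof -
  let ?A = "layer v i" and ?B = "layer v (Suc i)" and ?C = "layer v (Suc (Suc i))"
  have "4 \<le> card (edges_between ?B ?A)"
    using card_edges_between_layers_ge[OF four_edge_connected assms(1,2), of i] assms(3)
    by (simp add: edges_between_commute)
  also have "\<dots> \<le> (\<Sum>b\<in>?B. card (nbhd b \<inter> ?A))"
    by (rule card_edges_between_le[OF finite_layer])
  finally have down: "4 \<le> (\<Sum>b\<in>?B. card (nbhd b \<inter> ?A))" .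
  have "4 \<le> card (edges_between ?B ?C)"
    using card_edges_between_layers_ge[OF four_edge_connected assms(1,2), of "Suc i"] assms(3)
    by simp
  also have "\<dots> \<le> (\<Sum>b\<in>?B. card (nbhd b \<inter> ?C))"
    by (rule card_edges_between_le[OF finite_layer])
  finally have up: "4 \<le> (\<Sum>b\<in>?B. card (nbhd b \<inter> ?C))" .
  have "?A \<inter> ?C = {}"
    by (auto simp: layer_def)
  then have "(\<Sum>b\<in>?B. card (nbhd b \<inter> (?A \<union> ?C)))
      = (\<Sum>b\<in>?B. card (nbhd b \<inter> ?A)) + (\<Sum>b\<in>?B. card (nbhd b \<inter> ?C))"
    by (simp add: Int_Un_distrib card_Un_disjoint finite_nbhd sum.distrib disjoint_iff)
  then show ?thesis
    using down up by simp
qed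

lemma card_three_layers_ge_9:
  assumes "v \<in> V" "w \<in> V" "Suc (Suc i) \<le> dist V E v w"
  shows "9 \<le> card (layer v i) + card (layer v (Suc i)) + card (layer v (Suc (Suc i)))"
proof -
  let ?A = "layer v i" and ?B = "layer v (Suc i)" and ?C = "layer v (Suc (Suc i))"
  have disjoint: "?A \<inter> ?B = {}" "?A \<inter> ?C = {}" "?B \<inter> ?C = {}"
    by (auto simp: layer_def)
  have "?B \<subseteq> V" "finite (?A \<union> ?C)" "?B \<inter> (?A \<union> ?C) = {}"
    using disjoint finite_layer by (auto simp: layer_def)
  moreover have "nbhd b \<subseteq> ?B \<union> (?A \<union> ?C)" if "b \<in> ?B" for b
    using nbhd_layer_subset[OF assms(1) that] by blast
  ultimately have "9 \<le> card (?B \<union> (?A \<union> ?C))"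
    using card_Un_ge_9_if_card_le_2 card_Un_ge_9_if_card_ge_3
      sum_card_nbhd_outer_layers_ge_8[OF assms]
    by (cases "card ?B \<le> 2") auto
  moreover have "card (?B \<union> (?A \<union> ?C)) = card ?B + card (?A \<union> ?C)"
    using disjoint by (intro card_Un_disjoint) (auto simp: finite_layer)
  moreover have "card (?A \<union> ?C) = card ?A + card ?C"
    using disjoint by (intro card_Un_disjoint) (auto simp: finite_layer)
  ultimately show ?thesis
    by simp
qed

lemma diameter_bound: "3 * diameter V E + 3 \<le> card V"
proof -
  define D where "D = diameter V E"
  obtain v w where vw: "v \<in> V" "w \<in> V" "dist V E v w = D"
    using diameter_attained unfolding D_def by blast
  show ?thesis
  proof (cases "2 \<le> D")
    case True
    let ?s = "\<lambda>k. card (layer v k)"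
    have "3 * Suc D \<le> (\<Sum>k\<le>D. ?s k)"
    proof (rule sum_ge_three_Suc_if_windows_ge_9[OF True])
      show "13 \<le> ?s 0 + ?s 1 + ?s 2"
        using card_ball_2_ge_13[OF vw(1)] card_ball_eq_sum_layers[of v 2]
        by (simp add: numeral_2_eq_2)
      show "1 \<le> ?s k" if "k \<le> D" for k
        using layer_nonempty[OF vw(1,2)] that vw(3) finite_layer
        by (simp add: Suc_le_eq card_gt_0_iff)
      show "9 \<le> ?s i + ?s (i + 1) + ?s (i + 2)" if "i + 2 \<le> D" for i
        using card_three_layers_ge_9[OF vw(1,2)] that vw(3) by simp
    qed
    also have "\<dots> = card (ball v D)"
      by (rule card_ball_eq_sum_layers[symmetric])
    also have "\<dots> \<le> card V"
      by (intro card_mono finite_V) (auto simp: ball_def)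
    finally show ?thesis
      by (simp add: D_def)
  next
    case False
    have "card (ball v 2) \<le> card V"
      by (intro card_mono finite_V) (auto simp: ball_def)
    then show ?thesis
      using card_ball_2_ge_13[OF vw(1)] False D_def by simp
  qed
qed

end

theorem theorem2:
  fixes V :: "'a set" and E :: "'a \<Rightarrow> 'a \<Rightarrow> bool"
  assumes "simple_graph V E"
    and "connected_graph V E"
    and "C4_free E"
    and "edge_connectivity_ge V E 4"
  shows "real (diameter V E) \<le> (real (card V) - 3) / 3"
proof -
  interpret C4_free_4_edge_connected_graph V E
    using assms by unfold_locales
  have "real (3 * diameter V E + 3) \<le> real (card V)"
    using diameter_bound by (simp only: of_nat_le_iff)
  then show ?thesis
    by simp
qed

end
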